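(* Let $P$ be a locally finite poset, $R$ a commutative unital ring and $n\ge 2$. For every integer $k\ge 0$, the submodule $J^n_k(P,R)$ is a (two-sided) ideal of $I^n(P,R)$.
   Context: For a poset $P$ and $n\ge 2$, $P^n_\le=\{(x_1,\dots,x_n)\in P^n: x_1\le\dots\le x_n\}$. For $\mathbf{x}=(x_1,\dots,x_n)\in P^n_\le$, $\mathcal{I}(\mathbf{x})=[x_1,x_2]\times\dots\times[x_{n-1},x_n]$, where $[a,b]=\{c\in P: a\le c\le b\}$. $I^n(P,R)$ is the $R$-module of functions $f:P^n_\le\to R$ with multiplication $(fg)(\mathbf{x})=\sum_{\mathbf{y}\in\mathcal{I}(\mathbf{x})}f(x_1,\mathbf{y})g(\mathbf{y},x_n)$. For $a\le b$, $l(a,b)$ is the length of the interval $[a,b]$, i.e. the maximum of $|C|-1$ over chains $C\subseteq[a,b]$. $J^n_k(P,R)=\{f\in I^n(P,R): f(x_1,\dots,x_n)=0 \text{ whenever } l(x_1,x_n)<k\}$. An ideal is an $R$-submodule $I$ with $I^n(P,R)\,I\subseteq I$ and $I\,I^n(P,R)\subseteq I$. *)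

theory Defs
  imports Main
begin

text \<open>Tuples (x_1,...,x_n) are represented as lists of length n.
  Elements of I^n(P,R) are represented by functions on all lists that vanish
  outside P^n_\<le> (canonical representatives).\<close>

definition locally_finite_order :: "'a::order itself \<Rightarrow> bool" where
  "locally_finite_order _ \<longleftrightarrow> (\<forall>a b::'a. finite {a..b})"

definition chains_le :: "nat \<Rightarrow> ('a::order) list set" where
  "chains_le n = {xs. length xs = n \<and> sorted_wrt (\<le>) xs}"

definition box :: "('a::order) list \<Rightarrow> 'a list set" where
  "box xs = {ys. length ys = length xs - 1 \<and>
      (\<forall>i < length xs - 1. xs ! i \<le> ys ! i \<and> ys ! i \<le> xs ! (Suc i))}"

definition incidence_space :: "nat \<Rightarrow> (('a::order) list \<Rightarrow> 'r::comm_ring_1) set" where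
  "incidence_space n = {f. \<forall>xs. xs \<notin> chains_le n \<longrightarrow> f xs = 0}"

definition inc_mult :: "nat \<Rightarrow> (('a::order) list \<Rightarrow> 'r::comm_ring_1) \<Rightarrow> ('a list \<Rightarrow> 'r) \<Rightarrow> 'a list \<Rightarrow> 'r" where
  "inc_mult n f g xs = (if xs \<in> chains_le n
     then (\<Sum>ys\<in>box xs. f (hd xs # ys) * g (ys @ [last xs])) else 0)"

definition interval_length :: "'a::order \<Rightarrow> 'a \<Rightarrow> nat" where
  "interval_length a b = Max {card C - 1 | C. C \<subseteq> {a..b} \<and> Complete_Partial_Order.chain (\<le>) C}"

definition J_ideal :: "nat \<Rightarrow> nat \<Rightarrow> (('a::order) list \<Rightarrow> 'r::comm_ring_1) set" where
  "J_ideal n k = {f \<in> incidence_space n.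
      \<forall>xs \<in> chains_le n. interval_length (hd xs) (last xs) < k \<longrightarrow> f xs = 0}"

definition is_inc_ideal :: "nat \<Rightarrow> (('a::order) list \<Rightarrow> 'r::comm_ring_1) set \<Rightarrow> bool" where
  "is_inc_ideal n I \<longleftrightarrow> I \<subseteq> incidence_space n \<and> (\<lambda>_. 0) \<in> I
     \<and> (\<forall>f\<in>I. \<forall>g\<in>I. (\<lambda>xs. f xs + g xs) \<in> I)
     \<and> (\<forall>r. \<forall>f\<in>I. (\<lambda>xs. r * f xs) \<in> I)
     \<and> (\<forall>f\<in>incidence_space n. \<forall>g\<in>I. inc_mult n f g \<in> I \<and> inc_mult n g f \<in> I)"

end

theory Submission
  imports Defs
begin

text \<open>If \<open>g \<in> J\<^sup>n\<^sub>k\<close>, every summand of \<open>(f g)(x)\<close> contains a factor \<open>g(y, x\<^sub>n)\<close> whose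
  endpoints span a subinterval of \<open>[x\<^sub>1, x\<^sub>n]\<close>; by local finiteness the length of an interval
  is monotone under inclusion, so \<open>l(x\<^sub>1, x\<^sub>n) < k\<close> forces every such factor to vanish.\<close>

lemma interval_length_mono:
  fixes a b c d :: "'a::order"
  assumes fin: "finite {a..b}" and "a \<le> c" and "d \<le> b"
  shows "interval_length c d \<le> interval_length a b"
proof -
  let ?lengths = "\<lambda>a b. {card C - 1 | C. C \<subseteq> {a..b} \<and> Complete_Partial_Order.chain (\<le>) C}"
  have sub: "?lengths c d \<subseteq> ?lengths a b"
    using assms(2,3) by (force intro: order_trans)
  have "?lengths a b \<subseteq> (\<lambda>C. card C - 1) ` Pow {a..b}" by auto
  then have fin_lengths: "finite (?lengths a b)"
    using fin by (meson finite_Pow_iff finite_imageI finite_subset)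
  have "card {} - 1 \<in> ?lengths c d" by (auto intro!: exI[of _ "{}"] simp: chain_empty)
  then have "?lengths c d \<noteq> {}" by blast
  from Max_mono[OF sub this fin_lengths] show ?thesis
    unfolding interval_length_def .
qed

lemma hd_le_hd_box_snoc:
  assumes "ys \<in> box xs" and "xs \<noteq> []"
  shows "hd xs \<le> hd (ys @ [last xs])"
proof (cases ys)
  case Nil
  then have "length xs = 1" using assms by (cases xs) (auto simp: box_def)
  then show ?thesis using Nil by (cases xs) auto
next
  case (Cons y ys')
  have "0 < length xs - 1" "\<forall>i < length xs - 1. xs ! i \<le> ys ! i"
    using assms(1) Cons by (auto simp: box_def)
  then have "xs ! 0 \<le> ys ! 0" by blast
  then show ?thesis using Cons assms(2) by (simp add: hd_conv_nth)
qed

lemma last_box_Cons_le_last: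
  assumes "ys \<in> box xs" and "xs \<noteq> []"
  shows "last (hd xs # ys) \<le> last xs"
proof (cases "ys = []")
  case True
  then have "length xs = 1" using assms by (cases xs) (auto simp: box_def)
  then show ?thesis using True by (cases xs) auto
next
  case False
  have len: "length ys = length xs - 1"
    and "\<forall>i < length xs - 1. ys ! i \<le> xs ! Suc i"
    using assms(1) by (auto simp: box_def)
  moreover have "0 < length ys" using False by simp
  ultimately have "ys ! (length ys - 1) \<le> xs ! Suc (length ys - 1)" by simp
  moreover have "Suc (length ys - 1) = length xs - 1" using len \<open>0 < length ys\<close> by simp
  ultimately show ?thesis
    using False assms(2) by (simp add: last_conv_nth)
qed

lemma J_ideal_vanishes_inside:
  assumes "g \<in> J_ideal n k" and "finite {a..b}" and "interval_length a b < k"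
    and "a \<le> hd zs" and "last zs \<le> b"
  shows "g zs = 0"
proof (cases "zs \<in> chains_le n")
  case True
  have "interval_length (hd zs) (last zs) < k"
    using interval_length_mono[OF assms(2,4,5)] assms(3) by linarith
  with True assms(1) show ?thesis by (simp add: J_ideal_def)
next
  case False
  with assms(1) show ?thesis by (simp add: J_ideal_def incidence_space_def)
qed

lemma inc_mult_in_J_ideal:
  fixes f g :: "('a::order) list \<Rightarrow> 'r::comm_ring_1"
  assumes lf: "locally_finite_order TYPE('a)" and "0 < n"
    and g: "g \<in> J_ideal n k"
  shows "inc_mult n f g \<in> J_ideal n k" and "inc_mult n g f \<in> J_ideal n k"
proof -
  have vanish: "g (ys @ [last xs]) = 0" "g (hd xs # ys) = 0"
    if "xs \<in> chains_le n" "interval_length (hd xs) (last xs) < k" "ys \<in> box xs" for xs ys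
  proof -
    have "xs \<noteq> []" using that(1) \<open>0 < n\<close> by (auto simp: chains_le_def)
    moreover have fin: "finite {hd xs..last xs}" using lf by (simp add: locally_finite_order_def)
    ultimately show "g (ys @ [last xs]) = 0" "g (hd xs # ys) = 0"
      using J_ideal_vanishes_inside[OF g fin that(2)]
        hd_le_hd_box_snoc[OF that(3)] last_box_Cons_le_last[OF that(3)] by simp_all
  qed
  show "inc_mult n f g \<in> J_ideal n k" "inc_mult n g f \<in> J_ideal n k"
    using vanish by (auto simp: J_ideal_def incidence_space_def inc_mult_def)
qed

theorem lemma2p1:
  fixes n k :: nat
  assumes "locally_finite_order TYPE('a::order)"
    and "n \<ge> 2"
  shows "is_inc_ideal n (J_ideal n k :: ('a list \<Rightarrow> 'r::comm_ring_1) set)"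
proof -
  have "0 < n" using assms(2) by simp
  note products = inc_mult_in_J_ideal[OF assms(1) this]
  show ?thesis
    unfolding is_inc_ideal_def
    by (auto simp: products) (auto simp: J_ideal_def incidence_space_def)
qed

end
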